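(* Let $N_0\ge 1$ be an integer, $\lambda>0$, and for each $i\in\mathbb{N}$ let $\alpha_i>0$, $\rho_i>0$, and let $\mu_i(j),\sigma_i(j)\in\mathbb{R}$ be given for $j\ge N_0\vee i$. Assume: (i) for each $i\in\mathbb{N}$, the sequences $\{\mu_i(j)\}_{j\ge N_0\vee i}$ and $\{\sigma_i(j)\}_{j\ge N_0\vee i}$ are bounded; (ii) there exist constants $0<\underline{\beta}\le\overline{\beta}$ with $\underline{\beta}\le\beta_i(j)\le\overline{\beta}$ for all $j\ge N_0$ and $1\le i\le j$, where $\beta_i(j)$ is defined in the context. Then there exist real numbers $\{A(j),k_i(j)\}_{j\ge N_0,\,1\le i\le j}$ satisfying, for every $j\ge N_0$ and $1\le i\le j$, $$\frac{1}{A(j)}=\beta_\Sigma(j)+\lambda-\Big(\alpha_\Sigma(j)\sum_{i=1}^j\frac{\lambda A(j+1)e^{-\alpha_i(k_i(j+1)-k_i(j))}}{\alpha_i}\Big)\frac{1}{A(j)},$$ $$k_i(j)=\frac{(\beta_i(j)+\lambda)A(j)-1}{\alpha_i}-\frac{\lambda A(j+1)e^{-\alpha_i(k_i(j+1)-k_i(j))}}{\alpha_i},$$ together with the bounds $$\frac{1}{\overline{\beta}+\lambda}<A(j)\le\frac{1}{\underline{\beta}},\qquad A(j)e^{-\alpha_ik_i(j)}\le\frac{1}{\underline{\beta}},\qquad -\ln\Big(\frac{\overline{\beta}+\lambda}{\underline{\beta}}\Big)\le\alpha_ik_i(j)\le\frac{\overline{\beta}+\lambda}{\underline{\beta}}-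1.$$
   Context: For $j\ge N_0$ and $1\le i\le j$ define $\alpha_\Sigma(j):=\big(\sum_{i=1}^j 1/\alpha_i\big)^{-1}$, $\beta_i(j):=\rho_i+\alpha_i\mu_i(j)-\tfrac12\alpha_i^2\sigma_i^2(j)$, $\beta_\Sigma(j):=\alpha_\Sigma(j)\sum_{i=1}^j \beta_i(j)/\alpha_i$. (Assumption (ii) implies $\underline{\beta}\le\beta_\Sigma(j)\le\overline{\beta}$.) *)

theory Defs
  imports Complex_Main
begin

text \<open>Indices i range over the positive integers; alpha, rho :: nat => real,
 mu, sigma :: nat => nat => real with mu i j = mu_i(j).\<close>

definition alpha_Sigma :: "(nat \<Rightarrow> real) \<Rightarrow> nat \<Rightarrow> real" where
  "alpha_Sigma alpha j = inverse (\<Sum>i=1..j. 1 / alpha i)"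

definition beta_i :: "(nat \<Rightarrow> real) \<Rightarrow> (nat \<Rightarrow> real) \<Rightarrow> (nat \<Rightarrow> nat \<Rightarrow> real)
    \<Rightarrow> (nat \<Rightarrow> nat \<Rightarrow> real) \<Rightarrow> nat \<Rightarrow> nat \<Rightarrow> real" where
  "beta_i rho alpha mu sigma i j =
     rho i + alpha i * mu i j - (1/2) * (alpha i)^2 * (sigma i j)^2"

definition beta_Sigma :: "(nat \<Rightarrow> real) \<Rightarrow> (nat \<Rightarrow> real) \<Rightarrow> (nat \<Rightarrow> nat \<Rightarrow> real)
    \<Rightarrow> (nat \<Rightarrow> nat \<Rightarrow> real) \<Rightarrow> nat \<Rightarrow> real" where
  "beta_Sigma rho alpha mu sigma j =
     alpha_Sigma alpha j * (\<Sum>i=1..j. beta_i rho alpha mu sigma i j / alpha i)"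

end

theory Submission
  imports Defs "HOL-Analysis.Analysis"
begin

(* Put y_i(j) = alpha_i k_i(j) and c_i = lam A(j+1) exp (-y_i(j+1)). The k-equations become
   y_i + c_i exp y_i = (beta_i + lam) A(j) - 1, and given them the A-equation is equivalent to
   sum_i y_i / alpha_i = 0. For coefficients 0 < c_i <= lam / beta_lo this system in (A(j), y(j))
   is solved by the intermediate value theorem in A(j), because the inverse of y |-> y + c exp y is
   monotone and continuous. Every solution satisfies 1/(beta_hi + lam) < A(j) <= 1/beta_lo and
   A(j) exp (-y_i(j)) <= 1/beta_lo, which puts the coefficients of step j - 1 back into
   (0, lam / beta_lo]. So the recursion can be run backwards from any horizon inside a fixed
   compact set of states, and by Tychonoff's theorem the finite backward chains have a limit
   that solves the recursion for all j >= N0. *)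

lemma strict_mono_lin_exp:
  fixes c :: real
  assumes "0 \<le> c"
  shows "strict_mono (\<lambda>y. y + c * exp y)"
  by (rule strict_monoI) (use assms in \<open>simp add: add_less_le_mono mult_left_mono\<close>)

lemma lin_exp_surj:
  fixes c t :: real
  assumes "0 \<le> c"
  shows "\<exists>y. y + c * exp y = t"
proof -
  define a where "a = min t 0 - c"
  have "a + c * exp a \<le> t"
  proof -
    have "c * exp a \<le> c"
      using assms by (intro mult_left_le) (simp_all add: a_def)
    then show ?thesis by (simp add: a_def)
  qed
  moreover have "t \<le> t + c * exp t" and "a \<le> t"
    using assms by (simp_all add: a_def)
  moreover have "continuous_on {a..t} (\<lambda>y. y + c * exp y)"
    by (intro continuous_intros)
  ultimately show ?thesis
    using IVT'[of "\<lambda>y. y + c * exp y" a t t] by blast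
qed

(* Equals t - W (c exp t) with Lambert's W. *)
definition lin_exp_inv :: "real \<Rightarrow> real \<Rightarrow> real" where
  "lin_exp_inv c t = (THE y. y + c * exp y = t)"

lemma lin_exp_ex1:
  fixes c t :: real
  assumes "0 \<le> c"
  shows "\<exists>!y. y + c * exp y = t"
  using lin_exp_surj[OF assms] strict_mono_eq[OF strict_mono_lin_exp[OF assms]] by metis

lemma lin_exp_inv:
  "0 \<le> c \<Longrightarrow> lin_exp_inv c t + c * exp (lin_exp_inv c t) = t"
  unfolding lin_exp_inv_def by (rule theI', rule lin_exp_ex1)

lemma lin_exp_inv_eqI:
  "0 \<le> c \<Longrightarrow> y + c * exp y = t \<Longrightarrow> lin_exp_inv c t = y"
  unfolding lin_exp_inv_def by (rule the1_equality, rule lin_exp_ex1)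

lemma lin_exp_inv_mono:
  assumes "0 \<le> c" "s \<le> t"
  shows "lin_exp_inv c s \<le> lin_exp_inv c t"
  using strict_mono_less_eq[OF strict_mono_lin_exp[OF assms(1)],
      of "lin_exp_inv c s" "lin_exp_inv c t"]
    lin_exp_inv[OF assms(1), of s] lin_exp_inv[OF assms(1), of t] assms(2)
  by simp

lemma lipschitz_lin_exp_inv:
  assumes "0 \<le> c"
  shows "1-lipschitz_on UNIV (lin_exp_inv c)"
proof -
  have "lin_exp_inv c t - lin_exp_inv c s \<le> t - s" if "s \<le> t" for s t
  proof -
    have "c * exp (lin_exp_inv c s) \<le> c * exp (lin_exp_inv c t)"
      using assms lin_exp_inv_mono[OF assms that] by (simp add: mult_left_mono)
    then show ?thesis
      using lin_exp_inv[OF assms, of s] lin_exp_inv[OF assms, of t] by linarith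
  qed
  then have "\<bar>lin_exp_inv c t - lin_exp_inv c s\<bar> \<le> \<bar>t - s\<bar>" for s t
    using lin_exp_inv_mono[OF assms, of s t] lin_exp_inv_mono[OF assms, of t s]
    by (cases "s \<le> t") (auto simp: abs_if)
  then show ?thesis
    by (intro lipschitz_onI) (auto simp: dist_real_def)
qed

lemma continuous_on_lin_exp_inv:
  "0 \<le> c \<Longrightarrow> continuous_on S (lin_exp_inv c)"
  using lipschitz_on_continuous_on[OF lipschitz_lin_exp_inv] continuous_on_subset by blast

lemma lin_exp_system_solvable:
  fixes alpha b c :: "'i \<Rightarrow> real" and bl lam :: real
  assumes alpha: "\<And>i. i \<in> S \<Longrightarrow> 0 < alpha i" and b: "\<And>i. i \<in> S \<Longrightarrow> bl \<le> b i"
    and c: "\<And>i. i \<in> S \<Longrightarrow> 0 \<le> c i \<and> c i \<le> lam / bl" and bl: "0 < bl"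
  shows "\<exists>A y. (\<forall>i\<in>S. y i + c i * exp (y i) = (b i + lam) * A - 1) \<and> (\<Sum>i\<in>S. y i / alpha i) = 0"
proof -
  define y where "y A i = lin_exp_inv (c i) ((b i + lam) * A - 1)" for A i
  define F where "F A = (\<Sum>i\<in>S. y A i / alpha i)" for A
  have "alpha i \<noteq> 0" if "i \<in> S" for i
    using alpha[OF that] by simp
  then have "continuous_on {0..1/bl} F"
    unfolding F_def y_def using c
    by (intro continuous_intros continuous_on_compose2[OF continuous_on_lin_exp_inv]) auto
  moreover have "F 0 \<le> 0"
    unfolding F_def
  proof (rule sum_nonpos)
    fix i assume i: "i \<in> S"
    have "y 0 i + c i * exp (y 0 i) = -1"
      using lin_exp_inv c[OF i] by (simp add: y_def)
    then have "y 0 i \<le> 0"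
      using c[OF i] by (smt (verit) exp_gt_zero mult_nonneg_nonneg)
    then show "y 0 i / alpha i \<le> 0"
      using alpha[OF i] by (simp add: divide_nonpos_pos)
  qed
  moreover have "0 \<le> F (1/bl)"
    unfolding F_def
  proof (rule sum_nonneg)
    fix i assume i: "i \<in> S"
    have "c i \<le> (b i + lam) * (1/bl) - 1"
      using c[OF i] b[OF i] bl by (simp add: field_simps)
    then have "lin_exp_inv (c i) (c i) \<le> y (1/bl) i"
      unfolding y_def using c[OF i] by (intro lin_exp_inv_mono) auto
    moreover have "lin_exp_inv (c i) (c i) = 0"
      using c[OF i] by (intro lin_exp_inv_eqI) auto
    ultimately show "0 \<le> y (1/bl) i / alpha i"
      using alpha[OF i] by simp
  qed
  ultimately obtain A where "F A = 0"
    using IVT'[of F 0 0 "1/bl"] bl by auto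
  moreover have "\<forall>i\<in>S. y A i + c i * exp (y A i) = (b i + lam) * A - 1"
    using c lin_exp_inv by (simp add: y_def)
  ultimately show ?thesis
    unfolding F_def by blast
qed

lemma ex_nonpos_of_sum_divide_eq_0:
  fixes y w :: "'i \<Rightarrow> real"
  assumes "finite S" "S \<noteq> {}" "\<And>i. i \<in> S \<Longrightarrow> 0 < w i" "(\<Sum>i\<in>S. y i / w i) = 0"
  shows "\<exists>i\<in>S. y i \<le> 0"
proof (rule ccontr)
  assume "\<not> ?thesis"
  then have "0 < (\<Sum>i\<in>S. y i / w i)"
    using assms by (intro sum_pos) auto
  with assms(4) show False by simp
qed

lemma lin_exp_solution_A_le:
  fixes y c b A bl lam :: real
  assumes eq: "y + c * exp y = (b + lam) * A - 1" and "y \<le> 0"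
    and "0 \<le> c" "c \<le> lam / bl" "bl \<le> b" "0 < bl" "0 < lam"
  shows "A \<le> 1 / bl"
proof (cases "A \<le> 0")
  case True
  then show ?thesis using \<open>0 < bl\<close> by (smt (verit) divide_pos_pos)
next
  case False
  have "c * exp y \<le> c"
    using assms by (intro mult_left_le) auto
  then have "(b + lam) * A \<le> 1 + lam / bl"
    using eq \<open>y \<le> 0\<close> \<open>c \<le> lam / bl\<close> by linarith
  also have "\<dots> = (bl + lam) * (1 / bl)"
    using \<open>0 < bl\<close> by (simp add: field_simps)
  finally have "(b + lam) * A \<le> (bl + lam) * (1 / bl)" .
  moreover have "(bl + lam) * A \<le> (b + lam) * A"
    using \<open>bl \<le> b\<close> False by (intro mult_right_mono) auto
  ultimately show ?thesis
    using assms by (smt (verit) mult_le_cancel_left_pos)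
qed

lemma lin_exp_solution_A_gt:
  fixes y c b A bh lam :: real
  assumes eq: "y + c * exp y = (b + lam) * A - 1" and "0 \<le> y"
    and "0 < c" "0 < b + lam" "b \<le> bh"
  shows "1 / (bh + lam) < A"
proof -
  have "1 < (b + lam) * A"
    using eq \<open>0 \<le> y\<close> \<open>0 < c\<close> by (smt (verit) exp_gt_zero mult_pos_pos)
  then have "0 < A"
    using \<open>0 < b + lam\<close> by (smt (verit) mult_nonneg_nonpos)
  then have "1 < (bh + lam) * A"
    using \<open>1 < (b + lam) * A\<close> \<open>b \<le> bh\<close> by (smt (verit) mult_right_mono)
  then show ?thesis
    using \<open>0 < b + lam\<close> \<open>b \<le> bh\<close> by (simp add: field_simps)
qed

lemma lin_exp_solution_bounds:
  fixes y c b A bl bh lam :: real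
  assumes eq: "y + c * exp y = (b + lam) * A - 1"
    and c: "0 \<le> c" "c \<le> lam / bl" and b: "bl \<le> b" "b \<le> bh" and "0 < bl" "0 < lam"
    and A: "1 / (bh + lam) < A" "A \<le> 1 / bl"
  shows "A * exp (- y) \<le> 1 / bl" and "- ln ((bh + lam) / bl) \<le> y" and "y \<le> (bh + lam) / bl - 1"
    and "\<bar>y\<bar> \<le> (bh + lam) / bl - 1"
proof -
  have "0 < A"
    using A b \<open>0 < bl\<close> \<open>0 < lam\<close> by (smt (verit) divide_pos_pos)
  have "(1 + y) * exp (- y) \<le> 1"
    using exp_ge_add_one_self[of y] by (simp add: exp_minus field_simps)
  moreover have "(b + lam) * A = 1 + y + c * exp y"
    using eq by linarith
  then have "(b + lam) * A * exp (- y) = (1 + y) * exp (- y) + c"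
    by (simp add: distrib_right mult.assoc exp_minus_inverse)
  ultimately have "(b + lam) * A * exp (- y) \<le> 1 + lam / bl"
    using c by linarith
  also have "\<dots> = (bl + lam) * (1 / bl)"
    using \<open>0 < bl\<close> by (simp add: field_simps)
  finally have "(b + lam) * (A * exp (- y)) \<le> (bl + lam) * (1 / bl)"
    by (simp add: mult.assoc)
  moreover have "(bl + lam) * (A * exp (- y)) \<le> (b + lam) * (A * exp (- y))"
    using b \<open>0 < A\<close> by (intro mult_right_mono) auto
  ultimately show exp_bound: "A * exp (- y) \<le> 1 / bl"
    using \<open>0 < bl\<close> \<open>0 < lam\<close> by (smt (verit) mult_le_cancel_left_pos)
  have "(bl * exp (- y)) * A \<le> 1"
    using exp_bound \<open>0 < bl\<close> by (simp add: field_simps)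
  moreover have "1 < (bh + lam) * A"
    using A(1) b \<open>0 < bl\<close> \<open>0 < lam\<close> by (simp add: field_simps)
  ultimately have "bl * exp (- y) < bh + lam"
    using \<open>0 < A\<close> by (smt (verit) mult_right_mono)
  then have "exp (- y) < (bh + lam) / bl"
    using \<open>0 < bl\<close> by (simp add: field_simps)
  then show lower: "- ln ((bh + lam) / bl) \<le> y"
    by (smt (verit) exp_gt_zero ln_exp ln_less_cancel_iff)
  have "y \<le> (b + lam) * A - 1"
    using eq c by (smt (verit) exp_gt_zero mult_nonneg_nonneg)
  also have "(b + lam) * A \<le> (bh + lam) * (1 / bl)"
    using b A \<open>0 < A\<close> \<open>0 < bl\<close> \<open>0 < lam\<close> by (intro mult_mono) auto
  finally show upper: "y \<le> (bh + lam) / bl - 1" by simp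
  have "ln ((bh + lam) / bl) \<le> (bh + lam) / bl - 1"
    using b \<open>0 < bl\<close> \<open>0 < lam\<close> by (intro ln_le_minus_one) simp
  then show "\<bar>y\<bar> \<le> (bh + lam) / bl - 1"
    using lower upper by linarith
qed

lemma lin_exp_system_A_bounds:
  fixes alpha b c y :: "'i \<Rightarrow> real" and A bl bh lam :: real
  assumes S: "finite S" "S \<noteq> {}" and alpha: "\<And>i. i \<in> S \<Longrightarrow> 0 < alpha i"
    and b: "\<And>i. i \<in> S \<Longrightarrow> bl \<le> b i \<and> b i \<le> bh"
    and c: "\<And>i. i \<in> S \<Longrightarrow> 0 < c i \<and> c i \<le> lam / bl" and "0 < bl" "0 < lam"
    and eq: "\<And>i. i \<in> S \<Longrightarrow> y i + c i * exp (y i) = (b i + lam) * A - 1"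
    and balanced: "(\<Sum>i\<in>S. y i / alpha i) = 0"
  shows "1 / (bh + lam) < A" and "A \<le> 1 / bl"
proof -
  obtain i where "i \<in> S" "y i \<le> 0"
    using ex_nonpos_of_sum_divide_eq_0[OF S alpha balanced] by blast
  then show "A \<le> 1 / bl"
    using lin_exp_solution_A_le[OF eq] b c \<open>0 < bl\<close> \<open>0 < lam\<close> by fastforce
  have "(\<Sum>i\<in>S. - y i / alpha i) = 0"
    using balanced by (simp add: sum_negf)
  then obtain i where "i \<in> S" "0 \<le> y i"
    using ex_nonpos_of_sum_divide_eq_0[OF S alpha] by fastforce
  moreover have "0 < b i + lam"
    using b[OF \<open>i \<in> S\<close>] \<open>0 < bl\<close> \<open>0 < lam\<close> by linarith
  ultimately show "1 / (bh + lam) < A"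
    using lin_exp_solution_A_gt[OF eq] b c by fastforce
qed

lemma reciprocal_equation_of_balanced:
  fixes alpha b y e :: "'i \<Rightarrow> real" and A lam :: real
  assumes S: "finite S" "S \<noteq> {}" and alpha: "\<And>i. i \<in> S \<Longrightarrow> 0 < alpha i" and "A \<noteq> 0"
    and e: "\<And>i. i \<in> S \<Longrightarrow> e i = (b i + lam) * A - 1 - y i"
    and balanced: "(\<Sum>i\<in>S. y i / alpha i) = 0"
  shows "1 / A = inverse (\<Sum>i\<in>S. 1 / alpha i) * (\<Sum>i\<in>S. b i / alpha i) + lam
          - (inverse (\<Sum>i\<in>S. 1 / alpha i) * (\<Sum>i\<in>S. e i / alpha i)) * (1 / A)"
proof -
  define S1 where "S1 = (\<Sum>i\<in>S. 1 / alpha i)"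
  define SB where "SB = (\<Sum>i\<in>S. b i / alpha i)"
  have "0 < S1"
    unfolding S1_def using S alpha by (intro sum_pos) auto
  have "(\<Sum>i\<in>S. e i / alpha i)
      = (\<Sum>i\<in>S. A * (b i / alpha i) + (lam * A - 1) * (1 / alpha i) - y i / alpha i)"
  proof (rule sum.cong [OF refl])
    fix i assume "i \<in> S"
    then have "alpha i \<noteq> 0"
      using alpha by force
    then show "e i / alpha i = A * (b i / alpha i) + (lam * A - 1) * (1 / alpha i) - y i / alpha i"
      unfolding e[OF \<open>i \<in> S\<close>] by (simp add: field_simps)
  qed
  also have "\<dots> = A * SB + (lam * A - 1) * S1"
    using balanced by (simp add: sum.distrib sum_subtractf sum_distrib_left SB_def S1_def)
  finally have sum_e: "(\<Sum>i\<in>S. e i / alpha i) = A * SB + (lam * A - 1) * S1" .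
  show ?thesis
    unfolding S1_def [symmetric] SB_def [symmetric] sum_e
    using \<open>0 < S1\<close> \<open>A \<noteq> 0\<close> by (simp add: field_simps)
qed

lemma compact_backward_chain:
  fixes K :: "nat \<Rightarrow> 'a::topological_space set" and R :: "nat \<Rightarrow> ('a \<times> 'a) set"
  assumes compact: "\<And>j. compact (K j)" and closed: "\<And>j. closed (R j)"
    and nonempty: "\<And>j. K j \<noteq> {}"
    and step: "\<And>j s'. s' \<in> K (Suc j) \<Longrightarrow> \<exists>s\<in>K j. (s, s') \<in> R j"
  shows "\<exists>W. \<forall>j. W j \<in> K j \<and> (W j, W (Suc j)) \<in> R j"
proof -
  define P where "P = Pi\<^sub>E UNIV K"
  define Z where "Z T = {W. \<forall>j<T. (W j, W (Suc j)) \<in> R j}" for T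
  have "compactin (product_topology (\<lambda>_. euclidean) UNIV) P"
    unfolding P_def using compact by (simp add: compactin_PiE)
  then have "compact P"
    by (simp only: euclidean_product_topology compactin_euclidean_iff)
  have "closed (Z T)" for T
  proof -
    have "Z T = (\<Inter>j<T. (\<lambda>W. (W j, W (Suc j))) -` R j)"
      by (auto simp: Z_def)
    moreover have "closed ((\<lambda>W. (W j, W (Suc j))) -` R j)" for j
      by (intro continuous_closed_vimage closed continuous_intros) simp_all
    ultimately show ?thesis by auto
  qed
  have finite_chain: "\<exists>W\<in>P. W T = s \<and> W \<in> Z T" if "s \<in> K T" for T s
    using that
  proof (induction T arbitrary: s)
    case 0
    define W where "W = (\<lambda>j. SOME x. x \<in> K j)(0 := s)"
    have "W \<in> P"
      using 0 nonempty by (auto simp: P_def W_def some_in_eq)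
    then show ?case
      by (intro bexI[of _ W]) (auto simp: W_def Z_def)
  next
    case (Suc T)
    obtain s0 where "s0 \<in> K T" "(s0, s) \<in> R T"
      using step[OF Suc.prems] by blast
    then obtain W where W: "W \<in> P" "W T = s0" "W \<in> Z T"
      using Suc.IH by blast
    have "W(Suc T := s) \<in> P"
      using W(1) Suc.prems by (auto simp: P_def)
    moreover have "W(Suc T := s) \<in> Z (Suc T)"
      using W(2,3) \<open>(s0, s) \<in> R T\<close> by (auto simp: Z_def less_Suc_eq)
    ultimately show ?case
      using fun_upd_same[of W "Suc T" s] by blast
  qed
  have "P \<inter> \<Inter>(Z ` UNIV) \<noteq> {}"
  proof (rule compact_imp_fip_image[OF \<open>compact P\<close> \<open>\<And>T. closed (Z T)\<close>])
    fix I :: "nat set"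
    assume "finite I"
    then obtain T where T: "\<forall>t\<in>I. t \<le> T"
      using finite_nat_set_iff_bounded_le by blast
    obtain s where "s \<in> K T"
      using nonempty by blast
    then obtain W where "W \<in> P" "W \<in> Z T"
      using finite_chain by blast
    moreover have "Z T \<subseteq> Z t" if "t \<in> I" for t
      using T that by (auto simp: Z_def)
    ultimately show "P \<inter> \<Inter>(Z ` I) \<noteq> {}" by blast
  qed
  then obtain W where "W \<in> P" "\<And>T. W \<in> Z T"
    by blast
  then have "W j \<in> K j \<and> (W j, W (Suc j)) \<in> R j" for j
    using \<open>W \<in> Z (Suc j)\<close> by (auto simp: P_def Z_def)
  then show ?thesis by blast
qed

lemma coefficient_bounds:
  fixes A y bl bh lam :: real
  assumes "1 / (bh + lam) \<le> A" "A * exp (- y) \<le> 1 / bl" "0 < bl" "bl \<le> bh" "0 < lam"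
  shows "0 < lam * A * exp (- y)" and "lam * A * exp (- y) \<le> lam / bl"
proof -
  have "0 < A"
    using assms by (smt (verit) divide_pos_pos)
  then show "0 < lam * A * exp (- y)"
    using \<open>0 < lam\<close> by simp
  show "lam * A * exp (- y) \<le> lam / bl"
    using mult_left_mono[OF assms(2), of lam] \<open>0 < lam\<close> by (simp add: mult.assoc)
qed

(* A state (A, y) at time j stands for (A(j), (alpha_i k_i(j))_i). *)
definition admissible_states :: "real \<Rightarrow> real \<Rightarrow> real \<Rightarrow> nat \<Rightarrow> (real \<times> (nat \<Rightarrow> real)) set" where
  "admissible_states bl bh lam j =
     ({1 / (bh + lam)..1 / bl} \<times> (UNIV \<rightarrow>\<^sub>E {-((bh + lam) / bl - 1)..(bh + lam) / bl - 1}))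
     \<inter> {(A, y). \<forall>i\<in>{1..j}. A * exp (- y i) \<le> 1 / bl}"

definition backward_step ::
    "(nat \<Rightarrow> real) \<Rightarrow> (nat \<Rightarrow> real) \<Rightarrow> real \<Rightarrow> nat \<Rightarrow> ((real \<times> (nat \<Rightarrow> real)) \<times> (real \<times> (nat \<Rightarrow> real))) set"
  where
  "backward_step alpha b lam j = {((A, y), (A', y')).
     (\<forall>i\<in>{1..j}. y i + lam * A' * exp (- y' i) * exp (y i) = (b i + lam) * A - 1)
     \<and> (\<Sum>i=1..j. y i / alpha i) = 0}"

lemma continuous_on_state_coordinates [continuous_intros]:
  "continuous_on UNIV (\<lambda>p::real \<times> (nat \<Rightarrow> real). snd p i)"
  "continuous_on UNIV (\<lambda>p::(real \<times> (nat \<Rightarrow> real)) \<times> (real \<times> (nat \<Rightarrow> real)). snd (fst p) i)"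
  "continuous_on UNIV (\<lambda>p::(real \<times> (nat \<Rightarrow> real)) \<times> (real \<times> (nat \<Rightarrow> real)). snd (snd p) i)"
  by (rule continuous_on_product_then_coordinatewise; intro continuous_intros)+

lemma compact_admissible_states: "compact (admissible_states bl bh lam j)"
proof -
  define M where "M = (bh + lam) / bl - 1"
  have "compactin (product_topology (\<lambda>_. euclidean) UNIV) (UNIV \<rightarrow>\<^sub>E {-M..M})"
    by (simp add: compactin_PiE)
  then have "compact (UNIV \<rightarrow>\<^sub>E {-M..M})"
    by (simp only: euclidean_product_topology compactin_euclidean_iff)
  moreover have "closed {(A, y). \<forall>i\<in>{1..j}. A * exp (- y i) \<le> 1 / bl}"
    unfolding case_prod_unfold Ball_def
    by (intro closed_Collect_all closed_Collect_imp open_Collect_const closed_Collect_le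
        continuous_intros)
  ultimately show ?thesis
    unfolding admissible_states_def M_def [symmetric]
    by (intro compact_Int_closed compact_Times compact_Icc)
qed

lemma admissible_states_nonempty:
  assumes "0 < bl" "bl \<le> bh" "0 < lam"
  shows "admissible_states bl bh lam j \<noteq> {}"
proof -
  have "1 / (bh + lam) \<le> 1 / bl" and "0 \<le> (bh + lam) / bl - 1"
    using assms by (simp_all add: frac_le field_simps)
  then have "(1 / bl, \<lambda>_. 0) \<in> admissible_states bl bh lam j"
    by (simp add: admissible_states_def PiE_iff)
  then show ?thesis by blast
qed

lemma closed_backward_step:
  assumes "\<And>i. 1 \<le> i \<Longrightarrow> 0 < alpha i"
  shows "closed (backward_step alpha b lam j)"
  unfolding backward_step_def case_prod_unfold Ball_def using assms
  by (intro closed_Collect_all closed_Collect_imp closed_Collect_conj open_Collect_const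
      closed_Collect_eq continuous_intros) (auto simp: less_imp_neq[symmetric])

lemma backward_step_exists:
  assumes "1 \<le> j" and alpha: "\<And>i. 1 \<le> i \<Longrightarrow> 0 < alpha i"
    and "0 < bl" "bl \<le> bh" "0 < lam"
    and b: "\<And>i. i \<in> {1..j} \<Longrightarrow> bl \<le> b i \<and> b i \<le> bh"
    and s': "(A', y') \<in> admissible_states bl bh lam (Suc j)"
  shows "\<exists>s\<in>admissible_states bl bh lam j. (s, (A', y')) \<in> backward_step alpha b lam j"
proof -
  define c where "c i = lam * A' * exp (- y' i)" for i
  have c: "0 < c i \<and> c i \<le> lam / bl" if "i \<in> {1..j}" for i
    using coefficient_bounds[of bh lam A' "y' i" bl] s' that assms(3-5)
    by (simp add: c_def admissible_states_def)
  obtain A y where eq: "\<forall>i\<in>{1..j}. y i + c i * exp (y i) = (b i + lam) * A - 1"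
    and balanced: "(\<Sum>i=1..j. y i / alpha i) = 0"
    using lin_exp_system_solvable[where S="{1..j}" and alpha=alpha and b=b and c=c and bl=bl and lam=lam]
      alpha b c \<open>0 < bl\<close> by (auto simp: less_imp_le)
  have A: "1 / (bh + lam) < A" "A \<le> 1 / bl"
    using lin_exp_system_A_bounds[where S="{1..j}" and alpha=alpha and b=b and c=c and y=y and A=A
        and bl=bl and bh=bh and lam=lam]
      \<open>1 \<le> j\<close> alpha b c eq balanced \<open>0 < bl\<close> \<open>0 < lam\<close> by auto
  define y0 where "y0 i = (if i \<in> {1..j} then y i else 0)" for i
  have y_bounds: "\<bar>y i\<bar> \<le> (bh + lam) / bl - 1 \<and> A * exp (- y i) \<le> 1 / bl" if "i \<in> {1..j}" for i
    using lin_exp_solution_bounds[of "y i" "c i" "b i" lam A bl bh] eq c b A \<open>0 < bl\<close> \<open>0 < lam\<close> that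
    by (simp add: less_imp_le)
  have "0 \<le> (bh + lam) / bl - 1"
    using \<open>0 < bl\<close> \<open>bl \<le> bh\<close> \<open>0 < lam\<close> by (simp add: field_simps)
  then have "y0 i \<in> {-((bh + lam) / bl - 1)..(bh + lam) / bl - 1}" for i
    using y_bounds[of i] by (auto simp: y0_def abs_le_iff)
  then have "(A, y0) \<in> admissible_states bl bh lam j"
    using A y_bounds by (simp add: admissible_states_def PiE_iff y0_def)
  moreover have "(\<Sum>i=1..j. y0 i / alpha i) = (\<Sum>i=1..j. y i / alpha i)"
    by (rule sum.cong) (simp_all add: y0_def)
  then have "((A, y0), (A', y')) \<in> backward_step alpha b lam j"
    using eq balanced by (simp add: backward_step_def c_def y0_def)
  ultimately show ?thesis by blast
qed

lemma admissible_backward_chain_exists: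
  fixes alpha :: "nat \<Rightarrow> real" and b :: "nat \<Rightarrow> nat \<Rightarrow> real" and N0 :: nat and bl bh lam :: real
  assumes "1 \<le> N0" and alpha: "\<And>i. 1 \<le> i \<Longrightarrow> 0 < alpha i"
    and "0 < bl" "bl \<le> bh" "0 < lam"
    and b: "\<And>j i. N0 \<le> j \<Longrightarrow> i \<in> {1..j} \<Longrightarrow> bl \<le> b j i \<and> b j i \<le> bh"
  shows "\<exists>A y. \<forall>j\<ge>N0.
    (\<forall>i\<in>{1..j}. y j i + lam * A (Suc j) * exp (- y (Suc j) i) * exp (y j i) = (b j i + lam) * A j - 1)
    \<and> (\<Sum>i=1..j. y j i / alpha i) = 0
    \<and> 1 / (bh + lam) \<le> A j \<and> (\<forall>i\<in>{1..j}. A j * exp (- y j i) \<le> 1 / bl)"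
proof -
  define K where "K j = admissible_states bl bh lam (j + N0)" for j
  define R where "R j = backward_step alpha (b (j + N0)) lam (j + N0)" for j
  have step: "\<exists>s\<in>K j. (s, s') \<in> R j" if "s' \<in> K (Suc j)" for j s'
    using backward_step_exists[of "j + N0" alpha bl bh lam "b (j + N0)" "fst s'" "snd s'"]
      that assms by (simp add: K_def R_def)
  have "\<exists>W. \<forall>j. W j \<in> K j \<and> (W j, W (Suc j)) \<in> R j"
    by (rule compact_backward_chain[OF _ _ _ step])
      (simp_all add: K_def R_def compact_admissible_states closed_backward_step[of alpha, OF alpha]
        admissible_states_nonempty[OF \<open>0 < bl\<close> \<open>bl \<le> bh\<close> \<open>0 < lam\<close>])
  then obtain W where W: "\<And>j. W j \<in> K j \<and> (W j, W (Suc j)) \<in> R j"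
    by blast
  define A where "A j = fst (W (j - N0))" for j
  define y where "y j = snd (W (j - N0))" for j
  have "(A j, y j) \<in> admissible_states bl bh lam j
      \<and> ((A j, y j), (A (Suc j), y (Suc j))) \<in> backward_step alpha (b j) lam j" if "N0 \<le> j" for j
    using W[of "j - N0"] that by (simp add: K_def R_def A_def y_def Suc_diff_le)
  then show ?thesis
    by (intro exI[of _ A] exI[of _ y]) (simp add: admissible_states_def backward_step_def)
qed

lemma backward_solution_exists:
  fixes alpha :: "nat \<Rightarrow> real" and b :: "nat \<Rightarrow> nat \<Rightarrow> real" and N0 :: nat and bl bh lam :: real
  assumes "1 \<le> N0" and alpha: "\<And>i. 1 \<le> i \<Longrightarrow> 0 < alpha i"
    and "0 < bl" "bl \<le> bh" "0 < lam"
    and b: "\<And>j i. N0 \<le> j \<Longrightarrow> i \<in> {1..j} \<Longrightarrow> bl \<le> b j i \<and> b j i \<le> bh"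
  shows "\<exists>A y. \<forall>j\<ge>N0.
    (\<forall>i\<in>{1..j}. y j i = (b j i + lam) * A j - 1 - lam * A (Suc j) * exp (y j i - y (Suc j) i))
    \<and> (\<Sum>i=1..j. y j i / alpha i) = 0
    \<and> 1 / (bh + lam) < A j \<and> A j \<le> 1 / bl
    \<and> (\<forall>i\<in>{1..j}. A j * exp (- y j i) \<le> 1 / bl
          \<and> - ln ((bh + lam) / bl) \<le> y j i \<and> y j i \<le> (bh + lam) / bl - 1)"
proof -
  obtain A y where adm: "\<And>j. N0 \<le> j \<Longrightarrow>
      (\<forall>i\<in>{1..j}. y j i + lam * A (Suc j) * exp (- y (Suc j) i) * exp (y j i) = (b j i + lam) * A j - 1)
      \<and> (\<Sum>i=1..j. y j i / alpha i) = 0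
      \<and> 1 / (bh + lam) \<le> A j \<and> (\<forall>i\<in>{1..j}. A j * exp (- y j i) \<le> 1 / bl)"
    using admissible_backward_chain_exists[of N0 alpha bl bh lam b, OF assms] by blast
  have "(\<forall>i\<in>{1..j}. y j i = (b j i + lam) * A j - 1 - lam * A (Suc j) * exp (y j i - y (Suc j) i))
    \<and> (\<Sum>i=1..j. y j i / alpha i) = 0
    \<and> 1 / (bh + lam) < A j \<and> A j \<le> 1 / bl
    \<and> (\<forall>i\<in>{1..j}. A j * exp (- y j i) \<le> 1 / bl
          \<and> - ln ((bh + lam) / bl) \<le> y j i \<and> y j i \<le> (bh + lam) / bl - 1)"
    if "N0 \<le> j" for j
  proof -
    define c where "c i = lam * A (Suc j) * exp (- y (Suc j) i)" for i
    have c: "0 < c i \<and> c i \<le> lam / bl" if "i \<in> {1..j}" for i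
      using coefficient_bounds[of bh lam "A (Suc j)" "y (Suc j) i" bl] adm[of "Suc j"]
        \<open>N0 \<le> j\<close> that assms(3-5) by (simp add: c_def)
    have eq: "\<And>i. i \<in> {1..j} \<Longrightarrow> y j i + c i * exp (y j i) = (b j i + lam) * A j - 1"
      and balanced: "(\<Sum>i=1..j. y j i / alpha i) = 0"
      using adm[OF \<open>N0 \<le> j\<close>] by (simp_all add: c_def)
    have b_j: "\<And>i. i \<in> {1..j} \<Longrightarrow> bl \<le> b j i \<and> b j i \<le> bh"
      using b \<open>N0 \<le> j\<close> by blast
    have "{1..j} \<noteq> {}"
      using \<open>1 \<le> N0\<close> \<open>N0 \<le> j\<close> by simp
    then have A: "1 / (bh + lam) < A j" "A j \<le> 1 / bl"
      using lin_exp_system_A_bounds[where S="{1..j}" and alpha=alpha and b="b j" and c=c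
          and y="y j" and A="A j" and bl=bl and bh=bh and lam=lam]
        alpha b_j c eq balanced \<open>0 < bl\<close> \<open>0 < lam\<close> by auto
    have "c i * exp (y j i) = lam * A (Suc j) * exp (y j i - y (Suc j) i)" for i
      by (simp add: c_def mult.assoc flip: exp_add)
    then show ?thesis
      using lin_exp_solution_bounds[OF eq _ _ _ _ \<open>0 < bl\<close> \<open>0 < lam\<close> A] eq c b_j A balanced
      by (smt (verit))
  qed
  then show ?thesis by blast
qed

lemma backward_recursion_solvable:
  fixes alpha :: "nat \<Rightarrow> real" and b :: "nat \<Rightarrow> nat \<Rightarrow> real" and N0 :: nat and bl bh lam :: real
  assumes "1 \<le> N0" and alpha: "\<And>i. 1 \<le> i \<Longrightarrow> 0 < alpha i"
    and "0 < bl" "bl \<le> bh" "0 < lam"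
    and b: "\<And>j i. N0 \<le> j \<Longrightarrow> i \<in> {1..j} \<Longrightarrow> bl \<le> b j i \<and> b j i \<le> bh"
  shows "\<exists>A k. \<forall>j\<ge>N0. \<forall>i. 1 \<le> i \<and> i \<le> j \<longrightarrow>
       1 / A j = inverse (\<Sum>i=1..j. 1 / alpha i) * (\<Sum>i=1..j. b j i / alpha i) + lam
          - (inverse (\<Sum>i=1..j. 1 / alpha i)
             * (\<Sum>l=1..j. lam * A (j+1) * exp (- alpha l * (k l (j+1) - k l j)) / alpha l)) * (1 / A j)
     \<and> k i j = ((b j i + lam) * A j - 1) / alpha i
          - lam * A (j+1) * exp (- alpha i * (k i (j+1) - k i j)) / alpha i
     \<and> 1 / (bh + lam) < A j \<and> A j \<le> 1 / bl
     \<and> A j * exp (- alpha i * k i j) \<le> 1 / bl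
     \<and> - ln ((bh + lam) / bl) \<le> alpha i * k i j
     \<and> alpha i * k i j \<le> (bh + lam) / bl - 1"
proof -
  obtain A y where sol: "\<And>j. N0 \<le> j \<Longrightarrow>
    (\<forall>i\<in>{1..j}. y j i = (b j i + lam) * A j - 1 - lam * A (Suc j) * exp (y j i - y (Suc j) i))
    \<and> (\<Sum>i=1..j. y j i / alpha i) = 0
    \<and> 1 / (bh + lam) < A j \<and> A j \<le> 1 / bl
    \<and> (\<forall>i\<in>{1..j}. A j * exp (- y j i) \<le> 1 / bl
          \<and> - ln ((bh + lam) / bl) \<le> y j i \<and> y j i \<le> (bh + lam) / bl - 1)"
    using backward_solution_exists[of N0 alpha bl bh lam b, OF assms] by blast
  define k where "k i j = y j i / alpha i" for i j
  have alpha_k: "alpha i * k i j = y j i" "- alpha i * k i j = - y j i" if "1 \<le> i" for i j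
    using alpha[OF that] by (simp_all add: k_def)
  have e: "lam * A (j+1) * exp (- alpha l * (k l (j+1) - k l j)) = (b j l + lam) * A j - 1 - y j l"
    if "N0 \<le> j" "l \<in> {1..j}" for j l
  proof -
    have "- alpha l * (k l (j+1) - k l j) = y j l - y (Suc j) l"
      using alpha_k[of l] that by (simp add: right_diff_distrib)
    then show ?thesis
      using sol[OF \<open>N0 \<le> j\<close>] \<open>l \<in> {1..j}\<close> by force
  qed
  have A_eq: "1 / A j = inverse (\<Sum>i=1..j. 1 / alpha i) * (\<Sum>i=1..j. b j i / alpha i) + lam
          - (inverse (\<Sum>i=1..j. 1 / alpha i)
             * (\<Sum>l=1..j. lam * A (j+1) * exp (- alpha l * (k l (j+1) - k l j)) / alpha l)) * (1 / A j)"
    if "N0 \<le> j" for j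
  proof (rule reciprocal_equation_of_balanced[where y="y j"])
    show "A j \<noteq> 0"
      using sol[OF that] \<open>0 < bl\<close> \<open>bl \<le> bh\<close> \<open>0 < lam\<close> by (smt (verit) divide_pos_pos)
  qed (use that \<open>1 \<le> N0\<close> alpha e sol in auto)
  have k_eq: "k i j = ((b j i + lam) * A j - 1) / alpha i
          - lam * A (j+1) * exp (- alpha i * (k i (j+1) - k i j)) / alpha i"
    if "N0 \<le> j" "i \<in> {1..j}" for i j
    using e[OF that] by (simp add: k_def diff_divide_distrib)
  show ?thesis
    using sol alpha_k by (intro exI[of _ A] exI[of _ k] allI impI conjI A_eq k_eq) auto
qed

theorem theorem3p2:
  fixes N0 :: nat and lam :: real
    and alpha rho :: "nat \<Rightarrow> real"
    and mu sigma :: "nat \<Rightarrow> nat \<Rightarrow> real"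
    and beta_lo beta_hi :: real
  assumes N0: "N0 \<ge> 1"
    and lam: "lam > 0"
    and alpha_pos: "\<And>i. i \<ge> 1 \<Longrightarrow> alpha i > 0"
    and rho_pos: "\<And>i. i \<ge> 1 \<Longrightarrow> rho i > 0"
    and mu_bdd: "\<And>i. i \<ge> 1 \<Longrightarrow> \<exists>M. \<forall>j \<ge> max N0 i. \<bar>mu i j\<bar> \<le> M"
    and sigma_bdd: "\<And>i. i \<ge> 1 \<Longrightarrow> \<exists>M. \<forall>j \<ge> max N0 i. \<bar>sigma i j\<bar> \<le> M"
    and beta_lo_pos: "0 < beta_lo" and beta_lo_hi: "beta_lo \<le> beta_hi"
    and beta_bounds: "\<And>i j. j \<ge> N0 \<Longrightarrow> 1 \<le> i \<Longrightarrow> i \<le> j \<Longrightarrow>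
        beta_lo \<le> beta_i rho alpha mu sigma i j \<and> beta_i rho alpha mu sigma i j \<le> beta_hi"
  shows "\<exists>(A :: nat \<Rightarrow> real) (k :: nat \<Rightarrow> nat \<Rightarrow> real).
     \<forall>j \<ge> N0. \<forall>i. 1 \<le> i \<and> i \<le> j \<longrightarrow>
       1 / A j = beta_Sigma rho alpha mu sigma j + lam
          - (alpha_Sigma alpha j * (\<Sum>l=1..j. lam * A (j+1) * exp (- alpha l * (k l (j+1) - k l j)) / alpha l))
            * (1 / A j)
     \<and> k i j = ((beta_i rho alpha mu sigma i j + lam) * A j - 1) / alpha i
          - lam * A (j+1) * exp (- alpha i * (k i (j+1) - k i j)) / alpha i
     \<and> 1 / (beta_hi + lam) < A j \<and> A j \<le> 1 / beta_lo
     \<and> A j * exp (- alpha i * k i j) \<le> 1 / beta_lo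
     \<and> - ln ((beta_hi + lam) / beta_lo) \<le> alpha i * k i j
     \<and> alpha i * k i j \<le> (beta_hi + lam) / beta_lo - 1"
proof -
  have "\<And>j i. N0 \<le> j \<Longrightarrow> i \<in> {1..j} \<Longrightarrow>
      beta_lo \<le> beta_i rho alpha mu sigma i j \<and> beta_i rho alpha mu sigma i j \<le> beta_hi"
    using beta_bounds by simp
  from backward_recursion_solvable[of N0 alpha beta_lo beta_hi lam "\<lambda>j i. beta_i rho alpha mu sigma i j",
      OF N0 alpha_pos beta_lo_pos beta_lo_hi lam this]
  show ?thesis
    unfolding beta_Sigma_def alpha_Sigma_def by simp
qed

end
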